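(* Let $\Gamma_1=(\gamma_1,\gamma_1^\perp)$ and $\Gamma_2=(\gamma_2,\gamma_2^\perp)$ be two circles that lie on a common sphere $k\in\mathbb{P}(\mathcal{L})$ (with $\langle\mathfrak k,\mathfrak p\rangle\ne0$) and are not tangent to each other. Let $\mathfrak{s}_i\in\gamma_i^\perp\cap\mathcal L$, $i=1,2$, be spheres (not point spheres) that intersect $k$ orthogonally, and set $$\mathfrak{a}:=\langle\mathfrak{s}_2,\mathfrak{p}\rangle\mathfrak{s}_1-\langle\mathfrak{s}_1,\mathfrak{p}\rangle\mathfrak{s}_2,\qquad \tilde{\mathfrak{a}}:=\langle\sigma_{\mathfrak p}(\mathfrak{s}_2),\mathfrak{p}\rangle\mathfrak{s}_1-\langle\mathfrak{s}_1,\mathfrak{p}\rangle\sigma_{\mathfrak p}(\mathfrak{s}_2).$$ Then $\sigma_a$ and $\sigma_{\tilde a}$ are M-Lie inversions preserving $k$, each maps the points of $\Gamma_1$ bijectively onto the points of $\Gamma_2$, and they induce the two Ribaucour correspondences between $\Gamma_1$ and $\Gamma_2$: for every point $p_1$ of $\Gamma_1$ and $\sigma\in\{\sigma_a,\sigma_{\tilde a}\}$ there is a circle tangent to $\Gamma_1$ at $p_1$ and tangent to $\Gamma_2$ at $\sigma(p_1)$.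
   Context: Let $\mathbb{R}^{4,2}$ be $\mathbb{R}^6$ with a nondegenerate symmetric bilinear form $\langle\cdot,\cdot\rangle$ of signature $(4,2)$, $\mathcal{L}$ its light cone, $\mathbb{P}(\mathcal{L})$ the set of (oriented) spheres; black-letter vectors denote homogeneous coordinates. Two spheres are in oriented contact iff their coordinates are orthogonal. A point sphere complex $\mathfrak{p}$ with $\langle\mathfrak{p},\mathfrak{p}\rangle=-1$ is fixed; point spheres are elements of $\mathbb{P}(\mathcal{L}\cap\{\mathfrak p\}^\perp)$. A sphere $t$ intersects a sphere $s$ with $\langle\mathfrak s,\mathfrak p\rangle\neq0$ orthogonally iff $\langle\mathfrak{t},\mathfrak{s}+\langle\mathfrak{s},\mathfrak{p}\rangle\mathfrak{p}\rangle=0$. For $\langle\mathfrak a,\mathfrak a\rangle\neq0$ the Lie inversion with respect to $a$ is $\sigma_a(\mathfrak r)=\mathfrak r-\frac{2\langle\mathfrak r,\mathfrak a\rangle}{\langle\mathfrak a,\mathfrak a\rangle}\mathfrak a$; it is an M-Lie inversion if $\langle\mathfrak a,\mathfrak p\rangle=0$ (then it preserves $\mathfrak p$ and is a Möbius transformation). $\sigma_{\mathfrak p}$ reverses orientation of all spheres. A circle is a pair $\Gamma=(\gamma,\gamma^\perp)$ where $\gamma\subset\{\mathfrak{p}\}^\perp$ is a 3-dimensional subspace of signature $(2,1)$; its points are the point spheres in $\gamma$, the spheres containing it are those in $\gamma^\perp\cap\mathcal L$. A circle lies on a sphere $k$ iff $\mathfrak k\in\gamma^\perp$. A Ribaucour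 correspondence between two cospherical circles is a bijection between their points such that corresponding points are points of tangency of a circle tangent to both (the two circles envelop a common circle congruence). *)

theory Defs
  imports "HOL-Analysis.Analysis"
begin

type_synonym vec42 = "real ^ 6"

definition lform :: "vec42 \<Rightarrow> vec42 \<Rightarrow> real" where
  "lform x y = x$1*y$1 + x$2*y$2 + x$3*y$3 + x$4*y$4 - x$5*y$5 - x$6*y$6"

text \<open>Homogeneous coordinates of (oriented) spheres: nonzero vectors of the light cone.\<close>
definition is_sphere :: "vec42 \<Rightarrow> bool" where
  "is_sphere s \<longleftrightarrow> s \<noteq> 0 \<and> lform s s = 0"

definition lperp :: "vec42 set \<Rightarrow> vec42 set" where
  "lperp S = {x. \<forall>y\<in>S. lform x y = 0}"

text \<open>Point spheres with respect to the point sphere complex p.\<close>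
definition is_point_sphere :: "vec42 \<Rightarrow> vec42 \<Rightarrow> bool" where
  "is_point_sphere p x \<longleftrightarrow> is_sphere x \<and> lform x p = 0"

definition lie_inv :: "vec42 \<Rightarrow> vec42 \<Rightarrow> vec42" where
  "lie_inv a r = r - (2 * lform r a / lform a a) *\<^sub>R a"

definition is_M_Lie_inversion_vec :: "vec42 \<Rightarrow> vec42 \<Rightarrow> bool" where
  "is_M_Lie_inversion_vec p a \<longleftrightarrow> lform a a \<noteq> 0 \<and> lform a p = 0"

text \<open>A linear map preserves the sphere k (as element of P(L)).\<close>
definition preserves_sphere :: "(vec42 \<Rightarrow> vec42) \<Rightarrow> vec42 \<Rightarrow> bool" where
  "preserves_sphere f k \<longleftrightarrow> (\<exists>c. c \<noteq> 0 \<and> f k = c *\<^sub>R k)"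

definition sig21_subspace :: "vec42 set \<Rightarrow> bool" where
  "sig21_subspace g \<longleftrightarrow> subspace g \<and> dim g = 3 \<and>
     (\<exists>e1 e2 e3. span {e1, e2, e3} = g \<and>
        lform e1 e1 = 1 \<and> lform e2 e2 = 1 \<and> lform e3 e3 = -1 \<and>
        lform e1 e2 = 0 \<and> lform e1 e3 = 0 \<and> lform e2 e3 = 0)"

text \<open>A circle Gamma = (gamma, gamma^perp) is determined by gamma.\<close>
definition is_circle :: "vec42 \<Rightarrow> vec42 set \<Rightarrow> bool" where
  "is_circle p g \<longleftrightarrow> sig21_subspace g \<and> g \<subseteq> lperp {p}"

text \<open>Points of a circle (homogeneous coordinates of the point spheres in gamma).\<close>
definition circle_points :: "vec42 set \<Rightarrow> vec42 set" where
  "circle_points g = {x \<in> g. is_sphere x}"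

definition circle_on_sphere :: "vec42 set \<Rightarrow> vec42 \<Rightarrow> bool" where
  "circle_on_sphere g k \<longleftrightarrow> k \<in> lperp g"

text \<open>Two circles are tangent at the common point q iff they share q and the
  tangent direction at q, i.e. q^perp \<inter> gamma coincide.\<close>
definition circles_tangent_at :: "vec42 set \<Rightarrow> vec42 set \<Rightarrow> vec42 \<Rightarrow> bool" where
  "circles_tangent_at g1 g2 q \<longleftrightarrow> q \<in> circle_points g1 \<and> q \<in> circle_points g2 \<and>
      lperp {q} \<inter> g1 = lperp {q} \<inter> g2"

definition circles_tangent :: "vec42 set \<Rightarrow> vec42 set \<Rightarrow> bool" where
  "circles_tangent g1 g2 \<longleftrightarrow> (\<exists>q. circles_tangent_at g1 g2 q)"

definition intersects_orth :: "vec42 \<Rightarrow> vec42 \<Rightarrow> vec42 \<Rightarrow> bool" where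
  "intersects_orth p t s \<longleftrightarrow> lform t (s + lform s p *\<^sub>R p) = 0"

text \<open>The map f on points of gamma1 induces a Ribaucour correspondence with gamma2:
  corresponding points are points of tangency of a circle tangent to both
  (at a common point, which is fixed, the touching circle degenerates to the point).\<close>
definition induces_ribaucour :: "vec42 \<Rightarrow> (vec42 \<Rightarrow> vec42) \<Rightarrow> vec42 set \<Rightarrow> vec42 set \<Rightarrow> bool" where
  "induces_ribaucour p f g1 g2 \<longleftrightarrow>
     (\<forall>q\<in>circle_points g1.
        (q \<in> g2 \<and> f q = q) \<or>
        (\<exists>g. is_circle p g \<and> circles_tangent_at g g1 q \<and> circles_tangent_at g g2 (f q)))"

end

theory Submission
  imports Defs
begin

(*
  The vectors s_i, k, p are independent and orthogonal to gamma_i, so gamma_i is the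
  orthogonal complement of {s_i, k, p}. The vector a is orthogonal to p and k, so sigma_a
  fixes both, and a direct computation shows that sigma_a maps s1 to a multiple of s2 and
  s2 to a multiple of s1; being an isometric involution, sigma_a therefore exchanges
  gamma_1 and gamma_2. Non-tangency forces <s1,s2> ~= 0 (otherwise a is null and is
  either zero or a common point of tangency), hence <a,a> = -2 <s1,p> <s2,p> <s1,s2> ~= 0.
  For a point q of Gamma_1 not fixed by sigma_a, the span of q, the tangent vector t of
  Gamma_1 at q and a is a circle containing sigma_a q and sigma_a t, so it touches Gamma_1
  at q and Gamma_2 at sigma_a q. The same argument applied to sigma_p s2, which is s2 with
  the opposite orientation, gives the second inversion.
*)

lemma exhaust_6:
  fixes x :: 6
  shows "x = 1 \<or> x = 2 \<or> x = 3 \<or> x = 4 \<or> x = 5 \<or> x = 6"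
proof (induct x)
  case (of_int z)
  then have "0 \<le> z" "z < 6" by simp_all
  then have "z = 0 \<or> z = 1 \<or> z = 2 \<or> z = 3 \<or> z = 4 \<or> z = 5" by presburger
  then show ?case by auto
qed

lemma UNIV_6: "(UNIV::6 set) = {1, 2, 3, 4, 5, 6}"
  using exhaust_6 by auto

lemma sum_6: "sum f (UNIV::6 set) = f 1 + f 2 + f 3 + f 4 + f 5 + f 6"
  unfolding UNIV_6 by (simp add: ac_simps)

lemma lform_commute: "lform x y = lform y x"
  by (simp add: lform_def algebra_simps)

lemma lform_add_left [simp]: "lform (x + y) z = lform x z + lform y z"
  and lform_add_right [simp]: "lform z (x + y) = lform z x + lform z y"
  and lform_diff_left [simp]: "lform (x - y) z = lform x z - lform y z"
  and lform_diff_right [simp]: "lform z (x - y) = lform z x - lform z y"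
  and lform_scaleR_left [simp]: "lform (c *\<^sub>R x) z = c * lform x z"
  and lform_scaleR_right [simp]: "lform z (c *\<^sub>R x) = c * lform z x"
  and lform_zero_left [simp]: "lform 0 z = 0"
  and lform_zero_right [simp]: "lform z 0 = 0"
  and lform_minus_left [simp]: "lform (- x) z = - lform x z"
  and lform_minus_right [simp]: "lform z (- x) = - lform z x"
  by (simp_all add: lform_def algebra_simps)

definition signature_flip :: "vec42 \<Rightarrow> vec42" where
  "signature_flip x = (\<chi> i. if i = 5 \<or> i = 6 then - x$i else x$i)"

lemma lform_eq_inner_signature_flip: "lform x y = inner (signature_flip x) y"
  by (simp add: lform_def signature_flip_def inner_vec_def sum_6)

lemma linear_signature_flip: "linear signature_flip"
  by (rule linearI) (auto simp: signature_flip_def vec_eq_iff)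

lemma signature_flip_signature_flip [simp]: "signature_flip (signature_flip x) = x"
  by (auto simp: signature_flip_def vec_eq_iff)

lemma subspace_lperp: "subspace (lperp S)"
  by (auto simp: subspace_def lperp_def)

lemma lperp_eq_orthogonal_complement:
  "lperp S = {y. \<forall>x\<in>span (signature_flip ` S). orthogonal x y}"
proof -
  have orthogonal_span: "(\<forall>x\<in>span T. orthogonal x y) \<longleftrightarrow> (\<forall>x\<in>T. orthogonal x y)" for T y
  proof
    assume "\<forall>x\<in>T. orthogonal x y"
    then show "\<forall>x\<in>span T. orthogonal x y"
      using orthogonal_to_span[of _ T y] by (simp add: orthogonal_commute)
  qed (simp add: span_base)
  have "lform y x = inner (signature_flip x) y" for x y
    by (metis lform_commute lform_eq_inner_signature_flip)
  then have "y \<in> lperp S \<longleftrightarrow> (\<forall>x\<in>signature_flip ` S. orthogonal x y)" for y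
    by (simp add: lperp_def orthogonal_def)
  then show ?thesis
    by (simp add: orthogonal_span set_eq_iff)
qed

lemma dim_lperp: "dim (lperp S) + dim S = 6"
proof -
  have "inj signature_flip"
    by (metis injI signature_flip_signature_flip)
  then have "dim (signature_flip ` S) = dim S"
    by (metis eucl.dim_image_eq linear_signature_flip inj_on_subset subset_UNIV)
  moreover have "dim {y \<in> UNIV. \<forall>x \<in> span (signature_flip ` S). orthogonal x y}
      + dim (span (signature_flip ` S)) = dim (UNIV::vec42 set)"
    by (rule dim_subspace_orthogonal_to_vectors) auto
  ultimately show ?thesis by (simp add: lperp_eq_orthogonal_complement)
qed

lemma dim_two_vectors:
  fixes u v :: "'a::real_vector"
  assumes "\<And>c1 c2. c1 *\<^sub>R u + c2 *\<^sub>R v = 0 \<Longrightarrow> c1 = 0 \<and> c2 = 0"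
  shows "dim {u, v} = 2"
proof -
  have "u \<noteq> v" using assms[of 1 "-1"] by auto
  have "v \<notin> span {}" using assms[of 0 1] by auto
  moreover have "u \<notin> span {v}"
  proof
    assume "u \<in> span {v}"
    then obtain c where "u = c *\<^sub>R v" by (auto simp: span_singleton)
    then show False using assms[of 1 "-c"] by auto
  qed
  ultimately have "independent {u, v}"
    using \<open>u \<noteq> v\<close> by (simp add: independent_insert)
  then show ?thesis using \<open>u \<noteq> v\<close> by (simp add: dim_eq_card_independent)
qed

lemma dim_three_vectors:
  fixes u v w :: "'a::real_vector"
  assumes "\<And>c1 c2 c3. c1 *\<^sub>R u + c2 *\<^sub>R v + c3 *\<^sub>R w = 0 \<Longrightarrow> c1 = 0 \<and> c2 = 0 \<and> c3 = 0"
  shows "dim {u, v, w} = 3"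
proof -
  have "u \<noteq> v" "u \<noteq> w" "v \<noteq> w"
    using assms[of 1 "-1" 0] assms[of 1 0 "-1"] assms[of 0 1 "-1"] by auto
  have "w \<notin> span {}" using assms[of 0 0 1] by auto
  moreover have "v \<notin> span {w}"
  proof
    assume "v \<in> span {w}"
    then obtain c where "v = c *\<^sub>R w" by (auto simp: span_singleton)
    then show False using assms[of 0 1 "-c"] by auto
  qed
  moreover have "u \<notin> span {v, w}"
  proof
    assume "u \<in> span {v, w}"
    then obtain c d where "u - c *\<^sub>R v - d *\<^sub>R w = 0"
      by (auto simp: span_breakdown_eq span_singleton)
    then show False using assms[of 1 "-c" "-d"] by (auto simp: algebra_simps)
  qed
  ultimately have "independent {u, v, w}"
    using \<open>u \<noteq> v\<close> \<open>u \<noteq> w\<close> \<open>v \<noteq> w\<close> by (simp add: independent_insert)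
  then show ?thesis
    using \<open>u \<noteq> v\<close> \<open>u \<noteq> w\<close> \<open>v \<noteq> w\<close> by (simp add: dim_eq_card_independent)
qed

definition sig21_frame :: "vec42 \<Rightarrow> vec42 \<Rightarrow> vec42 \<Rightarrow> bool" where
  "sig21_frame e1 e2 e3 \<longleftrightarrow> lform e1 e1 = 1 \<and> lform e2 e2 = 1 \<and> lform e3 e3 = -1 \<and>
     lform e1 e2 = 0 \<and> lform e1 e3 = 0 \<and> lform e2 e3 = 0"

lemma sig21_frame_lform:
  assumes "sig21_frame e1 e2 e3"
  shows "lform (x1 *\<^sub>R e1 + x2 *\<^sub>R e2 + x3 *\<^sub>R e3) (y1 *\<^sub>R e1 + y2 *\<^sub>R e2 + y3 *\<^sub>R e3)
    = x1 * y1 + x2 * y2 - x3 * y3"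
  using assms by (auto simp: sig21_frame_def lform_commute[of e2 e1] lform_commute[of e3 e1]
      lform_commute[of e3 e2] algebra_simps)

lemma sig21_frame_coordinates:
  assumes "sig21_frame e1 e2 e3"
  shows "lform (x1 *\<^sub>R e1 + x2 *\<^sub>R e2 + x3 *\<^sub>R e3) e1 = x1"
    and "lform (x1 *\<^sub>R e1 + x2 *\<^sub>R e2 + x3 *\<^sub>R e3) e2 = x2"
    and "lform (x1 *\<^sub>R e1 + x2 *\<^sub>R e2 + x3 *\<^sub>R e3) e3 = - x3"
  using assms by (auto simp: sig21_frame_def lform_commute[of e2 e1] lform_commute[of e3 e1]
      lform_commute[of e3 e2])

lemma span_three_iff:
  "x \<in> span {a, b, c} \<longleftrightarrow> (\<exists>x1 x2 x3. x = x1 *\<^sub>R a + x2 *\<^sub>R b + x3 *\<^sub>R c)"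
proof -
  have "x - x1 *\<^sub>R a - x2 *\<^sub>R b = x3 *\<^sub>R c \<longleftrightarrow> x = x1 *\<^sub>R a + x2 *\<^sub>R b + x3 *\<^sub>R c"
    for x1 x2 x3
    by (metis add.commute diff_diff_eq diff_eq_eq)
  then show ?thesis
    by (simp add: span_breakdown_eq span_singleton image_iff eq_commute)
qed

lemma dim_sig21_frame:
  assumes "sig21_frame e1 e2 e3"
  shows "dim (span {e1, e2, e3}) = 3"
proof -
  have "c1 = 0 \<and> c2 = 0 \<and> c3 = 0" if "c1 *\<^sub>R e1 + c2 *\<^sub>R e2 + c3 *\<^sub>R e3 = 0" for c1 c2 c3
    using sig21_frame_coordinates[OF assms, of c1 c2 c3] unfolding that by simp
  then show ?thesis by (simp add: dim_three_vectors)
qed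

lemma sig21_subspace_iff_frame:
  "sig21_subspace g \<longleftrightarrow> (\<exists>e1 e2 e3. sig21_frame e1 e2 e3 \<and> g = span {e1, e2, e3})"
proof
  assume "\<exists>e1 e2 e3. sig21_frame e1 e2 e3 \<and> g = span {e1, e2, e3}"
  then obtain e1 e2 e3 where "sig21_frame e1 e2 e3" "g = span {e1, e2, e3}" by blast
  then show "sig21_subspace g"
    using dim_sig21_frame by (auto simp: sig21_subspace_def sig21_frame_def)
qed (auto simp: sig21_subspace_def sig21_frame_def)

lemma sig21_subspace_has_null_vector:
  assumes "sig21_subspace g"
  obtains q where "q \<in> g" "is_sphere q"
proof -
  obtain e1 e2 e3 where e: "sig21_frame e1 e2 e3" and g: "g = span {e1, e2, e3}"
    using assms sig21_subspace_iff_frame by blast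
  have "lform (e1 + e3) (e1 + e3) = 0"
    using e by (simp add: sig21_frame_def lform_commute[of e3 e1])
  moreover have "e1 + e3 \<noteq> 0"
    using e by (auto simp: sig21_frame_def add_eq_0_iff)
  moreover have "e1 + e3 \<in> g"
    unfolding g by (intro span_add span_base) auto
  ultimately show thesis
    by (intro that) (auto simp: is_sphere_def)
qed

lemma tangent_vector_exists:
  assumes g: "sig21_subspace g" and q: "q \<in> g" "is_sphere q"
  obtains t where "t \<in> g" "lform t q = 0" "lform t t = 1"
proof -
  obtain e1 e2 e3 where e: "sig21_frame e1 e2 e3" and g_eq: "g = span {e1, e2, e3}"
    using g sig21_subspace_iff_frame by blast
  obtain x1 x2 x3 where qx: "q = x1 *\<^sub>R e1 + x2 *\<^sub>R e2 + x3 *\<^sub>R e3"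
    using q(1) by (auto simp: g_eq span_three_iff)
  have null: "x1^2 + x2^2 = x3^2"
    using q(2) sig21_frame_lform[OF e] by (simp add: qx is_sphere_def power2_eq_square)
  have "x3 \<noteq> 0"
  proof
    assume "x3 = 0"
    then have "x1 = 0" "x2 = 0" using null by (auto simp: sum_power2_eq_zero_iff)
    then show False using q(2) qx \<open>x3 = 0\<close> by (simp add: is_sphere_def)
  qed
  \<comment> \<open>rotate the spatial part of q by a right angle and normalize\<close>
  define t where "t = (- x2 / \<bar>x3\<bar>) *\<^sub>R e1 + (x1 / \<bar>x3\<bar>) *\<^sub>R e2 + 0 *\<^sub>R e3"
  have "t \<in> g" unfolding g_eq t_def span_three_iff by blast
  moreover have "lform t q = 0"
    unfolding t_def qx sig21_frame_lform[OF e] by (simp add: algebra_simps)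
  moreover have "lform t t = 1"
    unfolding t_def sig21_frame_lform[OF e] using null \<open>x3 \<noteq> 0\<close>
    by (simp add: power2_eq_square field_simps)
  ultimately show thesis by (rule that)
qed

lemma tangent_line_eq:
  assumes g: "sig21_subspace g" and q: "q \<in> g" "is_sphere q"
    and t: "t \<in> g" "lform t q = 0" "lform t t = 1"
  shows "lperp {q} \<inter> g = span {q, t}"
proof -
  obtain e1 e2 e3 where e: "sig21_frame e1 e2 e3" and g_eq: "g = span {e1, e2, e3}"
    using g sig21_subspace_iff_frame by blast
  let ?T = "lperp {q} \<inter> g"
  have subspace_T: "subspace ?T"
    using g by (auto simp: sig21_subspace_def intro: subspace_inter subspace_lperp)
  have "q \<in> ?T" "t \<in> ?T"
    using q t by (auto simp: lperp_def is_sphere_def)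
  then have qt_T: "span {q, t} \<subseteq> ?T"
    using subspace_T by (intro span_minimal) auto
  have "q \<noteq> 0" using q by (simp add: is_sphere_def)
  have "c1 = 0 \<and> c2 = 0" if "c1 *\<^sub>R q + c2 *\<^sub>R t = 0" for c1 c2
  proof -
    have "lform (c1 *\<^sub>R q + c2 *\<^sub>R t) t = 0" using that by simp
    then have "c2 = 0" using t by (simp add: lform_commute[of q t])
    then show ?thesis using that \<open>q \<noteq> 0\<close> by simp
  qed
  then have dim_qt: "dim (span {q, t}) = 2" by (simp add: dim_two_vectors)
  obtain x1 x2 x3 where qx: "q = x1 *\<^sub>R e1 + x2 *\<^sub>R e2 + x3 *\<^sub>R e3"
    using q(1) by (auto simp: g_eq span_three_iff)
  have "\<exists>e\<in>{e1, e2, e3}. lform q e \<noteq> 0"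
    using \<open>q \<noteq> 0\<close> sig21_frame_coordinates[OF e, of x1 x2 x3] by (auto simp: qx)
  then obtain e where "e \<in> g" "e \<notin> ?T"
    by (auto simp: g_eq lperp_def lform_commute[of q] intro: span_base)
  then have "?T \<subset> g" by blast
  then have "dim ?T < dim g"
    using subspace_T g by (metis dim_psubset sig21_subspace_def span_eq_iff)
  then have "dim ?T \<le> dim (span {q, t})"
    using g dim_qt by (simp add: sig21_subspace_def)
  then show ?thesis
    using subspace_dim_equal[OF subspace_span subspace_T qt_T] by simp
qed

lemma sig21_subspace_null_tangent_span:
  assumes q: "lform q q = 0" and t: "lform t q = 0" "lform t t = 1" and a: "lform a q \<noteq> 0"
  shows "sig21_subspace (span {q, t, a})"
proof -
  define \<mu> where "\<mu> = lform a q"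
  define a' where "a' = a - lform a t *\<^sub>R t"
  define \<nu> where "\<nu> = lform a' a'"
  have a't: "lform a' t = 0" "lform t a' = 0"
    using t by (simp_all add: a'_def lform_commute[of t a])
  have a'q: "lform a' q = \<mu>" "lform q a' = \<mu>"
    using t by (simp_all add: a'_def \<mu>_def lform_commute[of q a] lform_commute[of q t])
  \<comment> \<open>orthonormal basis of the hyperbolic plane spanned by the null vector q and a' \<bottom> t\<close>
  define u where "u = ((1 - \<nu>) / (2 * \<mu>)) *\<^sub>R q + a'"
  define w where "w = ((-1 - \<nu>) / (2 * \<mu>)) *\<^sub>R q + a'"
  have "\<mu> \<noteq> 0" using a by (simp add: \<mu>_def)
  have frame: "sig21_frame t u w"
    unfolding sig21_frame_def u_def w_def
    using q t a't a'q \<open>\<mu> \<noteq> 0\<close>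
    by (simp add: \<nu>_def[symmetric] lform_commute[of t q] field_simps)
  have q_eq: "q = \<mu> *\<^sub>R (u - w)"
    using \<open>\<mu> \<noteq> 0\<close> by (simp add: u_def w_def scaleR_diff_left[symmetric] field_simps)
  have span_base_tuw: "t \<in> span {t, u, w}" "u \<in> span {t, u, w}" "w \<in> span {t, u, w}"
    and span_base_qta: "q \<in> span {q, t, a}" "t \<in> span {q, t, a}" "a \<in> span {q, t, a}"
    by (auto intro: span_base)
  have "q \<in> span {t, u, w}"
    unfolding q_eq using span_base_tuw by (intro span_scale span_diff)
  moreover have "a' = u - ((1 - \<nu>) / (2 * \<mu>)) *\<^sub>R q" by (simp add: u_def)
  ultimately have "a' \<in> span {t, u, w}"
    using span_base_tuw by (simp add: span_diff span_scale)
  moreover have "a = a' + lform a t *\<^sub>R t" by (simp add: a'_def)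
  ultimately have "a \<in> span {t, u, w}"
    using span_base_tuw by (metis span_add span_scale)
  have "a' \<in> span {q, t, a}"
    unfolding a'_def using span_base_qta by (intro span_diff span_scale)
  then have "u \<in> span {q, t, a}" "w \<in> span {q, t, a}"
    unfolding u_def w_def using span_base_qta by (simp_all add: span_add span_scale)
  have "span {q, t, a} = span {t, u, w}"
    unfolding span_eq using \<open>q \<in> span {t, u, w}\<close> \<open>a \<in> span {t, u, w}\<close>
      \<open>u \<in> span {q, t, a}\<close> \<open>w \<in> span {q, t, a}\<close> span_base_tuw span_base_qta by simp
  then show ?thesis
    unfolding sig21_subspace_iff_frame using frame by blast
qed

lemma lie_inv_adjoint: "lform (lie_inv a x) y = lform x (lie_inv a y)"
  by (simp add: lie_inv_def lform_commute[of a y] lform_commute[of a x] algebra_simps)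

lemma lie_inv_lform:
  assumes "lform a a \<noteq> 0"
  shows "lform (lie_inv a x) (lie_inv a y) = lform x y"
  using assms by (simp add: lie_inv_def lform_commute[of a y] field_simps)

lemma lie_inv_fixed: "lform x a = 0 \<Longrightarrow> lie_inv a x = x"
  by (simp add: lie_inv_def)

lemma lie_inv_lie_inv:
  assumes "lform a a \<noteq> 0"
  shows "lie_inv a (lie_inv a x) = x"
proof -
  have "lform (lie_inv a x) a = - lform x a"
    using assms by (simp add: lie_inv_def)
  then show ?thesis using assms by (simp add: lie_inv_def algebra_simps)
qed

lemma lie_inv_is_sphere:
  assumes "lform a a \<noteq> 0" "is_sphere x"
  shows "is_sphere (lie_inv a x)"
proof -
  have "lie_inv a x \<noteq> 0"
  proof
    assume "lie_inv a x = 0"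
    then have "x = lie_inv a 0" using lie_inv_lie_inv[OF assms(1), of x] by simp
    then show False using assms(2) by (simp add: is_sphere_def lie_inv_def)
  qed
  then show ?thesis
    using assms lie_inv_lform[OF assms(1)] by (simp add: is_sphere_def)
qed

lemma lie_inv_in_span: "x \<in> span S \<Longrightarrow> a \<in> span S \<Longrightarrow> lie_inv a x \<in> span S"
  unfolding lie_inv_def by (intro span_diff span_scale)

lemma lie_inv_in_lperp:
  assumes "lie_inv a u = c *\<^sub>R u'" "lie_inv a v = v" "lie_inv a w = w" "x \<in> lperp {u', v, w}"
  shows "lie_inv a x \<in> lperp {u, v, w}"
  using assms by (simp add: lperp_def lie_inv_adjoint)

lemma lie_inv_bij_betw_circle_points:
  assumes "lform a a \<noteq> 0" "\<And>x. x \<in> g1 \<Longrightarrow> lie_inv a x \<in> g2" "\<And>x. x \<in> g2 \<Longrightarrow> lie_inv a x \<in> g1"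
  shows "bij_betw (lie_inv a) (circle_points g1) (circle_points g2)"
  by (rule bij_betw_byWitness[where f' = "lie_inv a"])
    (auto simp: circle_points_def assms lie_inv_lie_inv lie_inv_is_sphere)

lemma lie_inv_induces_ribaucour:
  assumes g1: "is_circle p g1" and g2: "is_circle p g2"
    and a: "lform a a \<noteq> 0" "lform a p = 0"
    and maps: "\<And>x. x \<in> g1 \<Longrightarrow> lie_inv a x \<in> g2"
  shows "induces_ribaucour p (lie_inv a) g1 g2"
  unfolding induces_ribaucour_def
proof
  fix q assume "q \<in> circle_points g1"
  then have q: "q \<in> g1" "is_sphere q" by (auto simp: circle_points_def)
  show "(q \<in> g2 \<and> lie_inv a q = q) \<or>
      (\<exists>g. is_circle p g \<and> circles_tangent_at g g1 q \<and> circles_tangent_at g g2 (lie_inv a q))"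
  proof (cases "lform q a = 0")
    case True
    then have "lie_inv a q = q" by (rule lie_inv_fixed)
    then show ?thesis using maps[OF q(1)] by simp
  next
    case False
    have g1_sig21: "sig21_subspace g1" and g2_sig21: "sig21_subspace g2"
      using g1 g2 by (simp_all add: is_circle_def)
    obtain t where t: "t \<in> g1" "lform t q = 0" "lform t t = 1"
      using tangent_vector_exists[OF g1_sig21 q] .
    define D where "D = span {q, t, a}"
    have D_sig21: "sig21_subspace D"
      unfolding D_def using q t False
      by (intro sig21_subspace_null_tangent_span) (auto simp: is_sphere_def lform_commute[of q a])
    have "{q, t, a} \<subseteq> lperp {p}"
      using g1 q(1) t(1) a(2) by (auto simp: is_circle_def lperp_def)
    then have "D \<subseteq> lperp {p}"
      unfolding D_def by (rule span_minimal[OF _ subspace_lperp])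
    with D_sig21 have D_circle: "is_circle p D" by (simp add: is_circle_def)
    have in_D: "q \<in> D" "t \<in> D" "a \<in> D" by (auto simp: D_def intro: span_base)
    have image_in_D: "lie_inv a q \<in> D" "lie_inv a t \<in> D"
      using in_D unfolding D_def by (simp_all add: lie_inv_in_span)
    have image_sphere: "is_sphere (lie_inv a q)" using a(1) q(2) by (rule lie_inv_is_sphere)
    have image_tangent: "lform (lie_inv a t) (lie_inv a q) = 0" "lform (lie_inv a t) (lie_inv a t) = 1"
      using t a(1) by (simp_all add: lie_inv_lform)
    have "lperp {q} \<inter> D = lperp {q} \<inter> g1"
      using tangent_line_eq[OF D_sig21 in_D(1) q(2) in_D(2) t(2,3)]
        tangent_line_eq[OF g1_sig21 q t] by simp
    then have "circles_tangent_at D g1 q"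
      using in_D q by (simp add: circles_tangent_at_def circle_points_def)
    moreover have "lperp {lie_inv a q} \<inter> D = lperp {lie_inv a q} \<inter> g2"
      using tangent_line_eq[OF D_sig21 image_in_D(1) image_sphere image_in_D(2) image_tangent]
        tangent_line_eq[OF g2_sig21 maps[OF q(1)] image_sphere maps[OF t(1)] image_tangent] by simp
    then have "circles_tangent_at D g2 (lie_inv a q)"
      using image_in_D maps[OF q(1)] image_sphere by (simp add: circles_tangent_at_def circle_points_def)
    ultimately show ?thesis using D_circle by blast
  qed
qed

lemma circle_eq_lperp:
  assumes p: "lform p p = -1" and g: "is_circle p g"
    and s: "lform s s = 0" "s \<in> lperp g" "lform s p \<noteq> 0"
    and k: "lform k k = 0" "lform k p \<noteq> 0" "k \<in> lperp g"
    and orth: "intersects_orth p s k"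
  shows "g = lperp {s, k, p}"
proof -
  define \<alpha> where "\<alpha> = lform s p"
  define \<beta> where "\<beta> = lform k p"
  have "\<alpha> \<noteq> 0" "\<beta> \<noteq> 0" using s k by (simp_all add: \<alpha>_def \<beta>_def)
  have sk: "lform s k = - \<beta> * \<alpha>"
    using orth by (simp add: intersects_orth_def \<alpha>_def \<beta>_def lform_commute[of p s])
  have "c1 = 0 \<and> c2 = 0 \<and> c3 = 0" if "c1 *\<^sub>R s + c2 *\<^sub>R k + c3 *\<^sub>R p = 0" for c1 c2 c3
  proof -
    have "lform (c1 *\<^sub>R s + c2 *\<^sub>R k + c3 *\<^sub>R p) x = 0" for x
      using that by simp
    from this[of s] this[of k] this[of p]
    have "\<alpha> * (c3 - \<beta> * c2) = 0" "\<beta> * (c3 - \<alpha> * c1) = 0" "c1 * \<alpha> + c2 * \<beta> - c3 = 0"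
      using s(1) k(1) p sk
      by (simp_all add: \<alpha>_def \<beta>_def lform_commute[of k s] lform_commute[of p s]
          lform_commute[of p k] algebra_simps)
    then show ?thesis using \<open>\<alpha> \<noteq> 0\<close> \<open>\<beta> \<noteq> 0\<close> by auto
  qed
  then have "dim (lperp {s, k, p}) = 3"
    using dim_lperp[of "{s, k, p}"] dim_three_vectors[of s k p] by simp
  moreover have "g \<subseteq> lperp {s, k, p}"
    using g s(2) k(3) by (auto simp: is_circle_def lperp_def lform_commute)
  moreover have "subspace g" "dim g = 3"
    using g by (simp_all add: is_circle_def sig21_subspace_def)
  ultimately show ?thesis
    using subspace_dim_equal[OF _ subspace_lperp] by simp
qed

lemma circles_tangent_if_null_combination:
  assumes g1: "sig21_subspace g1" "g1 = lperp {s1, k, p}" and g2: "g2 = lperp {s2, k, p}"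
    and c: "c1 \<noteq> 0" "c2 \<noteq> 0"
    and a: "a = c2 *\<^sub>R s1 - c1 *\<^sub>R s2" "lform a a = 0" "a \<in> g1"
  shows "circles_tangent g1 g2"
proof -
  have same: "x \<in> g1 \<longleftrightarrow> x \<in> g2" if "lform x a = 0" for x
    using that c by (auto simp: a(1) g1(2) g2 lperp_def)
  show ?thesis
  proof (cases "a = 0")
    case True
    then have "g1 = g2" using same by auto
    obtain q where "q \<in> g1" "is_sphere q"
      using sig21_subspace_has_null_vector[OF g1(1)] .
    then have "circles_tangent_at g1 g2 q"
      using \<open>g1 = g2\<close> by (simp add: circles_tangent_at_def circle_points_def)
    then show ?thesis by (auto simp: circles_tangent_def)
  next
    case False
    then have "circles_tangent_at g1 g2 a"
      using a(2,3) same by (auto simp: circles_tangent_at_def circle_points_def is_sphere_def lperp_def)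
    then show ?thesis by (auto simp: circles_tangent_def)
  qed
qed

lemma lie_inv_swaps_null_vectors:
  assumes s: "lform s1 s1 = 0" "lform s2 s2 = 0" "lform s1 s2 \<noteq> 0" and c: "c1 \<noteq> 0" "c2 \<noteq> 0"
  defines "a \<equiv> c2 *\<^sub>R s1 - c1 *\<^sub>R s2"
  shows "lform a a = - 2 * c1 * c2 * lform s1 s2"
    and "lie_inv a s1 = (c1 / c2) *\<^sub>R s2"
    and "lie_inv a s2 = (c2 / c1) *\<^sub>R s1"
proof -
  show aa: "lform a a = - 2 * c1 * c2 * lform s1 s2"
    using s by (simp add: a_def lform_commute[of s2 s1] algebra_simps)
  have "lform s1 a = - c1 * lform s1 s2" "lform s2 a = c2 * lform s1 s2"
    using s by (simp_all add: a_def lform_commute[of s2 s1])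
  then show "lie_inv a s1 = (c1 / c2) *\<^sub>R s2" "lie_inv a s2 = (c2 / c1) *\<^sub>R s1"
    using s c by (simp_all add: lie_inv_def aa a_def field_simps)
qed

lemma ribaucour_inversion:
  assumes p: "lform p p = -1"
    and g1: "is_circle p g1" and g2: "is_circle p g2"
    and k: "lform k k = 0" "lform k p \<noteq> 0" "k \<in> lperp g1" "k \<in> lperp g2"
    and not_tangent: "\<not> circles_tangent g1 g2"
    and s1: "lform s1 s1 = 0" "s1 \<in> lperp g1" "lform s1 p \<noteq> 0" "intersects_orth p s1 k"
    and s2: "lform s2 s2 = 0" "s2 \<in> lperp g2" "lform s2 p \<noteq> 0" "intersects_orth p s2 k"
  defines "a \<equiv> lform s2 p *\<^sub>R s1 - lform s1 p *\<^sub>R s2"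
  shows "is_M_Lie_inversion_vec p a \<and> preserves_sphere (lie_inv a) k \<and>
    bij_betw (lie_inv a) (circle_points g1) (circle_points g2) \<and>
    induces_ribaucour p (lie_inv a) g1 g2"
proof -
  have g1_eq: "g1 = lperp {s1, k, p}"
    using circle_eq_lperp[OF p g1 s1(1-3) k(1-3) s1(4)] .
  have g2_eq: "g2 = lperp {s2, k, p}"
    using circle_eq_lperp[OF p g2 s2(1-3) k(1,2,4) s2(4)] .
  have "lform s1 k = - lform k p * lform s1 p" "lform s2 k = - lform k p * lform s2 p"
    using s1(4) s2(4) by (simp_all add: intersects_orth_def lform_commute[of p])
  then have ak: "lform a k = 0" and ap: "lform a p = 0"
    by (simp_all add: a_def)
  have "lform s1 s2 \<noteq> 0"
  proof
    assume s12: "lform s1 s2 = 0"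
    have "lform a a = 0" "a \<in> g1"
      using s1(1) s2(1) s12 ak ap
      by (auto simp: a_def g1_eq lperp_def lform_commute[of s2 s1] lform_commute[of _ a])
    then have "circles_tangent g1 g2"
      using g1 g1_eq g2_eq s1(3) s2(3) a_def
      by (intro circles_tangent_if_null_combination) (auto simp: is_circle_def)
    with not_tangent show False ..
  qed
  note swap = lie_inv_swaps_null_vectors[OF s1(1) s2(1) this s1(3) s2(3), folded a_def]
  have aa: "lform a a \<noteq> 0" using swap(1) \<open>lform s1 s2 \<noteq> 0\<close> s1(3) s2(3) by simp
  have fixed: "lie_inv a k = k" "lie_inv a p = p"
    using ak ap by (simp_all add: lie_inv_def lform_commute[of k a] lform_commute[of p a])
  have maps12: "lie_inv a x \<in> g2" if "x \<in> g1" for x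
    using lie_inv_in_lperp[OF swap(3) fixed] that by (simp add: g1_eq g2_eq)
  have maps21: "lie_inv a x \<in> g1" if "x \<in> g2" for x
    using lie_inv_in_lperp[OF swap(2) fixed] that by (simp add: g1_eq g2_eq)
  have "bij_betw (lie_inv a) (circle_points g1) (circle_points g2)"
    using aa maps12 maps21 by (rule lie_inv_bij_betw_circle_points)
  moreover have "induces_ribaucour p (lie_inv a) g1 g2"
    using g1 g2 aa ap maps12 by (rule lie_inv_induces_ribaucour)
  ultimately show ?thesis
    using aa ap fixed(1) by (auto simp: is_M_Lie_inversion_vec_def preserves_sphere_def)
qed

lemma lie_inv_point_sphere_complex:
  assumes p: "lform p p = -1" and g: "is_circle p g" and s: "s \<in> lperp g" "intersects_orth p s k"
  shows "lform (lie_inv p s) p = - lform s p"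
    and "lie_inv p s \<in> lperp g"
    and "intersects_orth p (lie_inv p s) k"
proof -
  have s'_eq: "lie_inv p s = s + (2 * lform s p) *\<^sub>R p"
    using p by (simp add: lie_inv_def)
  show "lform (lie_inv p s) p = - lform s p"
    using p by (simp add: s'_eq)
  show "lie_inv p s \<in> lperp g"
    using g s(1) by (auto simp: s'_eq is_circle_def lperp_def lform_commute[of p])
  show "intersects_orth p (lie_inv p s) k"
    using p s(2) by (simp add: s'_eq intersects_orth_def lform_commute[of p k])
qed

theorem mainTheorem6:
  fixes p k s1 s2 :: vec42 and g1 g2 :: "vec42 set"
  assumes hp: "lform p p = -1"
    and hg1: "is_circle p g1" and hg2: "is_circle p g2"
    and hk: "is_sphere k" and hkp: "lform k p \<noteq> 0"
    and hk1: "circle_on_sphere g1 k" and hk2: "circle_on_sphere g2 k"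
    and hnt: "\<not> circles_tangent g1 g2"
    and hs1: "is_sphere s1" "s1 \<in> lperp g1" "lform s1 p \<noteq> 0" "intersects_orth p s1 k"
    and hs2: "is_sphere s2" "s2 \<in> lperp g2" "lform s2 p \<noteq> 0" "intersects_orth p s2 k"
  defines "a \<equiv> lform s2 p *\<^sub>R s1 - lform s1 p *\<^sub>R s2"
    and "a2 \<equiv> lform (lie_inv p s2) p *\<^sub>R s1 - lform s1 p *\<^sub>R lie_inv p s2"
  shows "\<forall>b\<in>{a, a2}.
           is_M_Lie_inversion_vec p b \<and> preserves_sphere (lie_inv b) k \<and>
           bij_betw (lie_inv b) (circle_points g1) (circle_points g2) \<and>
           induces_ribaucour p (lie_inv b) g1 g2"
proof -
  have k: "lform k k = 0" "lform k p \<noteq> 0" "k \<in> lperp g1" "k \<in> lperp g2"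
    using hk hkp hk1 hk2 by (simp_all add: is_sphere_def circle_on_sphere_def)
  have s1: "lform s1 s1 = 0" and s2: "lform s2 s2 = 0"
    using hs1(1) hs2(1) by (simp_all add: is_sphere_def)
  note reversed = lie_inv_point_sphere_complex[OF hp hg2 hs2(2,4)]
  have "lform (lie_inv p s2) (lie_inv p s2) = 0"
    using hp s2 by (simp add: lie_inv_lform)
  then have "is_M_Lie_inversion_vec p a2 \<and> preserves_sphere (lie_inv a2) k \<and>
      bij_betw (lie_inv a2) (circle_points g1) (circle_points g2) \<and>
      induces_ribaucour p (lie_inv a2) g1 g2"
    unfolding a2_def using hs2(3) reversed
    by (intro ribaucour_inversion[OF hp hg1 hg2 k hnt s1 hs1(2-4)]) simp_all
  moreover have "is_M_Lie_inversion_vec p a \<and> preserves_sphere (lie_inv a) k \<and>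
      bij_betw (lie_inv a) (circle_points g1) (circle_points g2) \<and>
      induces_ribaucour p (lie_inv a) g1 g2"
    unfolding a_def by (rule ribaucour_inversion[OF hp hg1 hg2 k hnt s1 hs1(2-4) s2 hs2(2-4)])
  ultimately show ?thesis by simp
qed

end
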